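(* Let $\epsilon>0$ and let $T$ be a tournament on $n$ vertices which is $\epsilon$-far from being transitive. Let $v_1,\ldots,v_n$ be an optimal ordering of $V(T)$ and let $B$ be the set of backwards edges in this ordering. Then at least one of the following holds: (1) the subset $B'\subseteq B$ consisting of the backwards edges of length at least $n/16$ satisfies $|B'|\ge |B|/4$; (2) $T$ contains a subtournament on at least $n/8$ vertices which is $2\epsilon$-far from being transitive.
   Context: Given an ordering $v_1,\ldots,v_n$ of the vertices of a tournament $T$, a backwards edge is an edge directed from $v_j$ to $v_i$ with $i<j$; its length is $j-i$. An ordering is optimal if it minimizes the number of backwards edges among all orderings of $V(T)$. An $m$-vertex tournament is $\delta$-far from being transitive if every ordering of its vertices has at least $\delta m^2$ backwards edges (equivalently, at least $\delta m^2$ edge directions must be switched in any ordering to make it transitive). *)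

theory Defs
  imports Complex_Main
begin

definition tournament :: "'a set \<Rightarrow> ('a \<Rightarrow> 'a \<Rightarrow> bool) \<Rightarrow> bool" where
  "tournament V E \<longleftrightarrow> finite V \<and> (\<forall>u\<in>V. \<not> E u u) \<and>
     (\<forall>u\<in>V. \<forall>v\<in>V. u \<noteq> v \<longrightarrow> (E u v \<longleftrightarrow> \<not> E v u))"

definition is_ordering :: "'a set \<Rightarrow> 'a list \<Rightarrow> bool" where
  "is_ordering V vs \<longleftrightarrow> distinct vs \<and> set vs = V"

text \<open>Backwards edges of an ordering, as index pairs (i,j) with i<j and edge v_j -> v_i;
  the length of such an edge is j - i.\<close>
definition backedges :: "('a \<Rightarrow> 'a \<Rightarrow> bool) \<Rightarrow> 'a list \<Rightarrow> (nat \<times> nat) set" where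
  "backedges E vs = {(i, j). i < j \<and> j < length vs \<and> E (vs ! j) (vs ! i)}"

definition optimal_ordering :: "'a set \<Rightarrow> ('a \<Rightarrow> 'a \<Rightarrow> bool) \<Rightarrow> 'a list \<Rightarrow> bool" where
  "optimal_ordering V E vs \<longleftrightarrow> is_ordering V vs \<and>
     (\<forall>ws. is_ordering V ws \<longrightarrow> card (backedges E vs) \<le> card (backedges E ws))"

definition far_from_transitive :: "'a set \<Rightarrow> ('a \<Rightarrow> 'a \<Rightarrow> bool) \<Rightarrow> real \<Rightarrow> bool" where
  "far_from_transitive V E \<delta> \<longleftrightarrow>
     (\<forall>ws. is_ordering V ws \<longrightarrow> real (card (backedges E ws)) \<ge> \<delta> * (real (card V))^2)"

end

theory Submission
  imports Defs
begin

text \<open>Every backwards edge of length less than n/16 lies in one of K windows of m \<ge> n/8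
  consecutive vertices, the windows starting every h positions. A contiguous segment of an
  optimal ordering is itself optimal, so if no subtournament on at least n/8 vertices is
  2\<epsilon>-far from transitive, each window carries fewer than 2\<epsilon>m^2 backwards edges. The
  parameters can be chosen with 2Km^2 \<le> 3n^2/4, so the short backwards edges number at most
  3\<epsilon>n^2/4 \<le> 3|B|/4.\<close>

definition before :: "'a list \<Rightarrow> 'a \<Rightarrow> 'a \<Rightarrow> bool" where
  "before xs x y \<longleftrightarrow> (\<exists>i j. i < j \<and> j < length xs \<and> xs ! i = x \<and> xs ! j = y)"

definition backpairs :: "('a \<Rightarrow> 'a \<Rightarrow> bool) \<Rightarrow> 'a list \<Rightarrow> ('a \<times> 'a) set" where
  "backpairs E xs = {(x, y). before xs x y \<and> E y x}"

lemma before_in_set: "before xs x y \<Longrightarrow> x \<in> set xs \<and> y \<in> set xs"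
  unfolding before_def by auto

lemma before_append:
  "before (xs @ ys) x y \<longleftrightarrow> before xs x y \<or> before ys x y \<or> (x \<in> set xs \<and> y \<in> set ys)"
proof
  assume "before (xs @ ys) x y"
  then obtain i j where ij: "i < j" "j < length (xs @ ys)" "(xs @ ys) ! i = x" "(xs @ ys) ! j = y"
    unfolding before_def by blast
  consider "j < length xs" | "i < length xs" "length xs \<le> j" | "length xs \<le> i"
    using ij(1) by linarith
  then show "before xs x y \<or> before ys x y \<or> (x \<in> set xs \<and> y \<in> set ys)"
  proof cases
    case 1
    then have "before xs x y" using ij unfolding before_def by (auto simp: nth_append)
    then show ?thesis by simp
  next
    case 2
    then show ?thesis using ij by (auto simp: nth_append)
  next
    case 3
    then have "before ys x y" using ij unfolding before_def
      by (intro exI[of _ "i - length xs"] exI[of _ "j - length xs"]) (auto simp: nth_append)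
    then show ?thesis by simp
  qed
next
  assume "before xs x y \<or> before ys x y \<or> (x \<in> set xs \<and> y \<in> set ys)"
  then show "before (xs @ ys) x y"
  proof (elim disjE)
    assume "before xs x y"
    then obtain i j where "i < j" "j < length xs" "xs ! i = x" "xs ! j = y"
      unfolding before_def by blast
    then show ?thesis unfolding before_def
      by (intro exI[of _ i] exI[of _ j]) (auto simp: nth_append)
  next
    assume "before ys x y"
    then obtain i j where "i < j" "j < length ys" "ys ! i = x" "ys ! j = y"
      unfolding before_def by blast
    then show ?thesis unfolding before_def
      by (intro exI[of _ "i + length xs"] exI[of _ "j + length xs"]) (auto simp: nth_append)
  next
    assume "x \<in> set xs \<and> y \<in> set ys"
    then obtain i j where "i < length xs" "xs ! i = x" "j < length ys" "ys ! j = y"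
      by (meson in_set_conv_nth)
    then show ?thesis unfolding before_def
      by (intro exI[of _ i] exI[of _ "j + length xs"]) (auto simp: nth_append)
  qed
qed

lemma finite_backedges: "finite (backedges E xs)"
  by (rule finite_subset[of _ "{..<length xs} \<times> {..<length xs}"]) (auto simp: backedges_def)

lemma backpairs_subset: "backpairs E xs \<subseteq> set xs \<times> set xs"
  unfolding backpairs_def using before_in_set by fastforce

lemma card_backedges_eq_backpairs:
  assumes "distinct xs"
  shows "card (backedges E xs) = card (backpairs E xs)"
proof -
  have "backpairs E xs = (\<lambda>(i, j). (xs ! i, xs ! j)) ` backedges E xs"
    unfolding backpairs_def backedges_def before_def by auto
  moreover have "inj_on (\<lambda>(i, j). (xs ! i, xs ! j)) (backedges E xs)"
    unfolding inj_on_def backedges_def using assms by (auto simp: nth_eq_iff_index_eq)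
  ultimately show ?thesis by (simp add: card_image)
qed

text \<open>The backwards pairs of P @ U @ S not inside U depend on U only through its vertex set.\<close>
lemma card_backpairs_middle:
  assumes "distinct (P @ U @ S)"
  shows "card (backpairs E (P @ U @ S)) =
    card (backpairs E P \<union> backpairs E S \<union>
      {(x, y). E y x \<and> (x \<in> set P \<and> y \<in> set U \<union> set S \<or> x \<in> set U \<and> y \<in> set S)})
    + card (backpairs E U)" (is "_ = card ?X + _")
proof -
  have split: "backpairs E (P @ U @ S) = ?X \<union> backpairs E U"
    unfolding backpairs_def by (auto simp: before_append)
  have "?X \<subseteq> set (P @ U @ S) \<times> set (P @ U @ S)"
    using backpairs_subset[of E P] backpairs_subset[of E S] by auto
  then have "finite ?X" by (rule finite_subset) auto
  moreover have "finite (backpairs E U)"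
    using backpairs_subset by (rule finite_subset) auto
  moreover have "?X \<inter> backpairs E U = {}"
    using assms backpairs_subset[of E P] backpairs_subset[of E S] backpairs_subset[of E U]
    by auto
  ultimately show ?thesis unfolding split by (simp add: card_Un_disjoint)
qed

lemma optimal_ordering_segment:
  assumes opt: "optimal_ordering V E vs" and "a + m \<le> length vs"
  shows "optimal_ordering (set (take m (drop a vs))) E (take m (drop a vs))"
  unfolding optimal_ordering_def
proof (intro conjI allI impI)
  define P U S where "P = take a vs" and "U = take m (drop a vs)" and "S = drop (a + m) vs"
  have vs: "vs = P @ U @ S" unfolding P_def U_def S_def
    by (metis add.commute append_take_drop_id drop_drop)
  have dv: "distinct vs" and sv: "set vs = V"
    using opt unfolding optimal_ordering_def is_ordering_def by auto
  show "is_ordering (set U) U" using dv vs unfolding is_ordering_def by auto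
  fix us assume "is_ordering (set U) us"
  then have su: "set us = set U" and du: "distinct us" unfolding is_ordering_def by auto
  have dv': "distinct (P @ us @ S)" using dv su du vs by auto
  have "card (backpairs E (P @ U @ S)) \<le> card (backpairs E (P @ us @ S))"
    using opt dv' sv su dv vs
    unfolding optimal_ordering_def is_ordering_def card_backedges_eq_backpairs[OF dv]
    by (metis card_backedges_eq_backpairs set_append)
  then have "card (backpairs E U) \<le> card (backpairs E us)"
    using card_backpairs_middle[OF dv'] card_backpairs_middle[of P U S E] dv vs su by simp
  then show "card (backedges E U) \<le> card (backedges E us)"
    using du dv vs by (simp add: card_backedges_eq_backpairs)
qed

lemma optimal_not_far_from_transitive:
  assumes "optimal_ordering V E vs" and "\<not> far_from_transitive V E \<delta>"
  shows "real (card (backedges E vs)) < \<delta> * (real (card V))\<^sup>2"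
  using assms unfolding optimal_ordering_def far_from_transitive_def
  by (meson le_less_trans not_le of_nat_le_iff)

definition window_backedges :: "('a \<Rightarrow> 'a \<Rightarrow> bool) \<Rightarrow> 'a list \<Rightarrow> nat \<Rightarrow> nat \<Rightarrow> (nat \<times> nat) set"
  where "window_backedges E vs a m = {(i, j) \<in> backedges E vs. a \<le> i \<and> j < a + m}"

lemma card_backedges_window_le:
  assumes "a + m \<le> length vs"
  shows "card (window_backedges E vs a m) \<le> card (backedges E (take m (drop a vs)))"
proof (rule card_inj_on_le[OF _ _ finite_backedges])
  show "inj_on (\<lambda>(i, j). (i - a, j - a)) (window_backedges E vs a m)"
    unfolding inj_on_def window_backedges_def backedges_def by auto
  show "(\<lambda>(i, j). (i - a, j - a)) ` window_backedges E vs a m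
      \<subseteq> backedges E (take m (drop a vs))"
    unfolding window_backedges_def backedges_def using assms by (auto simp: nth_take nth_drop)
qed

lemma card_backedges_window_lt:
  assumes "optimal_ordering V E vs" and "a + m \<le> length vs"
    and "\<not> far_from_transitive (set (take m (drop a vs))) E \<delta>"
  shows "real (card (window_backedges E vs a m)) < \<delta> * (real m)\<^sup>2"
proof -
  have "distinct vs" using assms(1) unfolding optimal_ordering_def is_ordering_def by auto
  then have "card (set (take m (drop a vs))) = m"
    using assms(2) by (simp add: distinct_card)
  then have "real (card (backedges E (take m (drop a vs)))) < \<delta> * (real m)\<^sup>2"
    using optimal_not_far_from_transitive[OF optimal_ordering_segment[OF assms(1,2)] assms(3)]
    by simp
  then show ?thesis using card_backedges_window_le[OF assms(2), of E] by linarith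
qed

text \<open>Windows of length m \<ge> n/8 starting every h positions: the overlap m - h accommodates
  every edge of length below n/16, K windows reach the end, and their total budget 2Km^2 is
  at most 3n^2/4. Below 64 the rounding is too coarse for a uniform
  choice and the values are checked one by one.\<close>
lemma window_parameters:
  fixes n :: nat
  assumes "n \<ge> 17"
  obtains m h K where "1 \<le> h" "h \<le> m" "m \<le> n" "n \<le> 8 * m" "n \<le> 16 * (m - h + 1)"
    "0 < K" "n - m \<le> (K - 1) * h" "8 * K * m * m \<le> 3 * n * n"
proof (cases "n \<ge> 64")
  case True
  define q where "q = n div 16"
  have q: "q \<ge> 4" "16 * q \<le> n" "n \<le> 16 * q + 15" using True unfolding q_def by auto
  have "8 * 15 * (2 * q + 2) * (2 * q + 2) = 480 * q * q + 960 * q + 480"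
    by (simp add: algebra_simps)
  also have "\<dots> \<le> 768 * q * q" using q(1) mult_le_mono1[OF q(1), of "288 * q"] by linarith
  also have "\<dots> \<le> 3 * n * n" using mult_le_mono[OF q(2) q(2)] by simp
  finally show ?thesis using q by (intro that[where m = "2 * q + 2" and h = "q + 2" and K = 15]) auto
next
  case False
  define ok where "ok n m h K \<longleftrightarrow> 1 \<le> h \<and> h \<le> m \<and> m \<le> n \<and> n \<le> 8 * m
    \<and> n \<le> 16 * (m - h + 1) \<and> 0 < K \<and> n - m \<le> (K - 1) * h \<and> 8 * K * m * m \<le> 3 * n * n"
    for n m h K :: nat
  define m h where "m n = (n + 7) div 8" and "h n = m n - (n - 1) div 16" for n :: nat
  have "\<forall>n \<in> set [17..<64]. ok n (m n) (h n) ((n - m n + h n - 1) div h n + 1)"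
    unfolding ok_def m_def h_def by (simp add: upt_rec)
  moreover have "n \<in> set [17..<64]" using assms False by (simp only: set_upt) simp
  ultimately show ?thesis using that unfolding ok_def by blast
qed

lemma short_pair_in_window:
  fixes i j m h n K :: nat
  assumes "1 \<le> h" "h \<le> m" "m \<le> n" "0 < K" "n - m \<le> (K - 1) * h"
    and "i < j" "j < n" "j - i \<le> m - h"
  shows "\<exists>t<K. min (t * h) (n - m) \<le> i \<and> j < min (t * h) (n - m) + m"
proof -
  define t where "t = min (i div h) (K - 1)"
  have "t < K" unfolding t_def using assms(4) by auto
  moreover have th: "t * h \<le> i" unfolding t_def
    by (meson div_times_less_eq_dividend le_trans min.cobounded1 mult_le_mono1)
  moreover have "j < min (t * h) (n - m) + m"
  proof (cases "t * h < n - m")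
    case True
    have "t = i div h"
    proof (rule ccontr)
      assume "t \<noteq> i div h"
      then have "t = K - 1" unfolding t_def by (auto simp: min_def)
      then show False using True assms(5) by simp
    qed
    then have "i < t * h + h" using assms(1)
      by (metis add.commute div_mult_mod_eq less_add_same_cancel1 mod_less_divisor
          add_less_mono1 zero_less_one le_less_trans)
    then show ?thesis using True assms(2,8) by (simp add: min_def)
  next
    case False
    then show ?thesis using assms(3,7) by (simp add: min_def)
  qed
  ultimately show ?thesis by (intro exI[of _ t]) (auto simp: min_def)
qed

lemma short_backedges_subset_windows:
  assumes "length vs = n" "1 \<le> h" "h \<le> m" "m \<le> n" "n \<le> 16 * (m - h + 1)"
    "0 < K" "n - m \<le> (K - 1) * h"
  shows "{(i, j) \<in> backedges E vs. 16 * (j - i) < n}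
    \<subseteq> (\<Union>t<K. window_backedges E vs (min (t * h) (n - m)) m)"
proof safe
  fix i j assume ij: "(i, j) \<in> backedges E vs" "16 * (j - i) < n"
  then have "i < j" "j < n" using assms(1) by (auto simp: backedges_def)
  then show "(i, j) \<in> (\<Union>t<K. window_backedges E vs (min (t * h) (n - m)) m)"
    using short_pair_in_window[OF assms(2,3,4,6,7)] ij assms(5)
    unfolding window_backedges_def by fastforce
qed

lemma card_short_backedges_le:
  assumes "\<epsilon> \<ge> 0" and opt: "optimal_ordering V E vs"
    and not_far: "\<And>S. S \<subseteq> V \<Longrightarrow> real (card S) \<ge> real (card V) / 8 \<Longrightarrow>
      \<not> far_from_transitive S E (2 * \<epsilon>)"
  shows "real (card {(i, j) \<in> backedges E vs. 16 * (j - i) < card V})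
    \<le> 3 / 4 * \<epsilon> * (real (card V))\<^sup>2" (is "real (card ?Sh) \<le> _")
proof (cases "card V \<le> 16")
  case True
  then have empty: "?Sh = {}" unfolding backedges_def by auto
  show ?thesis using assms(1) unfolding empty by simp
next
  case False
  define n where "n = card V"
  have dv: "distinct vs" and sv: "set vs = V"
    using opt unfolding optimal_ordering_def is_ordering_def by auto
  have len: "length vs = n" unfolding n_def using dv sv distinct_card by metis
  have "n \<ge> 17" using False n_def by simp
  then obtain m h K where p: "1 \<le> h" "h \<le> m" "m \<le> n" "n \<le> 8 * m" "n \<le> 16 * (m - h + 1)"
    "0 < K" "n - m \<le> (K - 1) * h" "8 * K * m * m \<le> 3 * n * n"
    by (rule window_parameters)
  define W where "W t = window_backedges E vs (min (t * h) (n - m)) m" for t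
  have fits: "min (t * h) (n - m) + m \<le> length vs" for t using p(3) len by auto
  have "finite (W t)" for t
    unfolding W_def window_backedges_def by (rule finite_subset[OF _ finite_backedges]) auto
  then have "card ?Sh \<le> card (\<Union>t<K. W t)"
    using short_backedges_subset_windows[OF len p(1,2,3,5,6,7), of E]
    unfolding W_def n_def by (intro card_mono) auto
  also have "\<dots> \<le> (\<Sum>t<K. card (W t))" by (rule card_UN_le) simp
  finally have "real (card ?Sh) \<le> (\<Sum>t<K. real (card (W t)))" by (simp flip: of_nat_sum)
  also have "\<dots> \<le> (\<Sum>t<K. 2 * \<epsilon> * (real m)\<^sup>2)"
  proof (rule sum_mono, rule less_imp_le)
    fix t
    have "set (take m (drop (min (t * h) (n - m)) vs)) \<subseteq> V"
      using sv by (meson in_set_dropD in_set_takeD subsetI)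
    moreover have "real (card (set (take m (drop (min (t * h) (n - m)) vs)))) \<ge> real n / 8"
      using fits[of t] dv p(4) by (simp add: distinct_card)
    ultimately show "real (card (W t)) < 2 * \<epsilon> * (real m)\<^sup>2"
      unfolding W_def using card_backedges_window_lt[OF opt fits] not_far n_def by blast
  qed
  also have "\<dots> = \<epsilon> * (2 * real K * (real m)\<^sup>2)" by simp
  also have "\<dots> \<le> \<epsilon> * (3 / 4 * (real n)\<^sup>2)"
    using assms(1) of_nat_mono[OF p(8), where 'a = real]
    by (intro mult_left_mono) (auto simp: power2_eq_square)
  finally show ?thesis unfolding n_def by simp
qed

theorem mainTheorem3:
  fixes V :: "'a set" and E :: "'a \<Rightarrow> 'a \<Rightarrow> bool" and \<epsilon> :: real and vs :: "'a list"
  assumes "\<epsilon> > 0"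
    and "tournament V E"
    and "far_from_transitive V E \<epsilon>"
    and "optimal_ordering V E vs"
  shows "real (card {(i, j) \<in> backedges E vs. real (j - i) \<ge> real (card V) / 16})
           \<ge> real (card (backedges E vs)) / 4
       \<or> (\<exists>S \<subseteq> V. real (card S) \<ge> real (card V) / 8 \<and> far_from_transitive S E (2 * \<epsilon>))"
proof (rule disjCI)
  assume "\<not> (\<exists>S \<subseteq> V. real (card S) \<ge> real (card V) / 8 \<and> far_from_transitive S E (2 * \<epsilon>))"
  then have short: "real (card {(i, j) \<in> backedges E vs. 16 * (j - i) < card V})
      \<le> 3 / 4 * \<epsilon> * (real (card V))\<^sup>2"
    using card_short_backedges_le[OF _ assms(4)] assms(1) by auto
  have "\<epsilon> * (real (card V))\<^sup>2 \<le> real (card (backedges E vs))"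
    using assms(3,4) unfolding far_from_transitive_def optimal_ordering_def by blast
  moreover have "card (backedges E vs) =
      card {(i, j) \<in> backedges E vs. real (j - i) \<ge> real (card V) / 16}
      + card {(i, j) \<in> backedges E vs. 16 * (j - i) < card V}"
    by (subst card_Un_disjoint[symmetric]) (auto intro: arg_cong[where f = card]
        finite_subset[OF _ finite_backedges])
  ultimately show "real (card {(i, j) \<in> backedges E vs. real (j - i) \<ge> real (card V) / 16})
      \<ge> real (card (backedges E vs)) / 4"
    using short by linarith
qed

end
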